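(* Let $A$ be a bounded distributive lattice, $X$ its Priestley space, and $\kappa$ a regular cardinal. Then $A$ is a $\kappa$-frame if and only if ${\sf cl}(U)$ is a clopen upset for each $\kappa$-clopen upset $U$ of $X$.
   Context: $A$ is a $\kappa$-frame if every subset of cardinality $<\kappa$ has a join and each such join $\bigvee S$ is distributive ($a\wedge\bigvee S=\bigvee\{a\wedge s:s\in S\}$ for all $a$). The Priestley space $X$ of $A$ is the set of prime filters ordered by inclusion, with topology generated by $\{\mathfrak s(a)\setminus\mathfrak s(b)\}$, $\mathfrak s(a)=\{x:a\in x\}$. ${\sf cl}$ is topological closure. A $\kappa$-clopen upset is a union of fewer than $\kappa$ clopen upsets. *)

theory Defs
  imports "HOL-Analysis.Analysis"
begin

definition is_join :: "'a::lattice set \<Rightarrow> 'a \<Rightarrow> bool" where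
  "is_join S j \<longleftrightarrow> (\<forall>s\<in>S. s \<le> j) \<and> (\<forall>u. (\<forall>s\<in>S. s \<le> u) \<longrightarrow> j \<le> u)"

definition kappa_frame :: "'b rel \<Rightarrow> 'a::{bounded_lattice,distrib_lattice} itself \<Rightarrow> bool" where
  "kappa_frame \<kappa> _ \<longleftrightarrow>
     (\<forall>S::'a set. (card_of S, \<kappa>) \<in> ordLess \<longrightarrow>
        (\<exists>j. is_join S j) \<and>
        (\<forall>a j. is_join S j \<longrightarrow> is_join ((\<lambda>s. inf a s) ` S) (inf a j)))"

definition is_filter :: "'a::{bounded_lattice,distrib_lattice} set \<Rightarrow> bool" where
  "is_filter F \<longleftrightarrow> F \<noteq> {} \<and> (\<forall>a\<in>F. \<forall>b. a \<le> b \<longrightarrow> b \<in> F) \<and> (\<forall>a\<in>F. \<forall>b\<in>F. inf a b \<in> F)"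

definition prime_filter :: "'a::{bounded_lattice,distrib_lattice} set \<Rightarrow> bool" where
  "prime_filter F \<longleftrightarrow> is_filter F \<and> F \<noteq> UNIV \<and> (\<forall>a b. sup a b \<in> F \<longrightarrow> a \<in> F \<or> b \<in> F)"

definition prime_filters :: "'a::{bounded_lattice,distrib_lattice} set set" where
  "prime_filters = {F. prime_filter F}"

definition stone_map :: "'a::{bounded_lattice,distrib_lattice} \<Rightarrow> 'a set set" ("\<ss>") where
  "\<ss> a = {x \<in> prime_filters. a \<in> x}"

text \<open>Topology of the Priestley space: generated by the sets s(a) - s(b).  Its topspace is the
  set of all prime filters (take a = top, b = bot).  The order is inclusion.\<close>
definition priestley_top :: "'a::{bounded_lattice,distrib_lattice} set topology" where
  "priestley_top = topology_generated_by {\<ss> a - \<ss> b | a b. True}"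

definition is_upset :: "'a::{bounded_lattice,distrib_lattice} set set \<Rightarrow> bool" where
  "is_upset U \<longleftrightarrow> U \<subseteq> prime_filters \<and> (\<forall>x\<in>U. \<forall>y\<in>prime_filters. x \<subseteq> y \<longrightarrow> y \<in> U)"

definition clopen_upset :: "'a::{bounded_lattice,distrib_lattice} set set \<Rightarrow> bool" where
  "clopen_upset U \<longleftrightarrow> openin priestley_top U \<and> closedin priestley_top U \<and> is_upset U"

definition kappa_clopen_upset :: "'b rel \<Rightarrow> 'a::{bounded_lattice,distrib_lattice} set set \<Rightarrow> bool" where
  "kappa_clopen_upset \<kappa> U \<longleftrightarrow>
     (\<exists>\<U>. (card_of \<U>, \<kappa>) \<in> ordLess \<and> (\<forall>V\<in>\<U>. clopen_upset V) \<and> U = \<Union>\<U>)"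

end

theory Submission
  imports Defs
begin

(* The clopen upsets of the Priestley space are exactly the sets stone_map a: this is compactness
   (Alexander's subbase theorem plus the prime filter theorem). A basic open set
   stone_map c - stone_map d misses the union of the stone_map a, a in S, iff inf c a <= d for
   all a in S. Hence the closure of that union is stone_map j iff j is a join of S preserved by
   every meet inf c, so the kappa-frame condition for S says exactly that the closure of the
   kappa-clopen upset determined by S is clopen. *)

section \<open>Prime filters\<close>

lemma prime_filter_upward: "prime_filter x \<Longrightarrow> a \<in> x \<Longrightarrow> a \<le> b \<Longrightarrow> b \<in> x"
  unfolding prime_filter_def is_filter_def by blast

lemma prime_filter_inf_iff: "prime_filter x \<Longrightarrow> inf a b \<in> x \<longleftrightarrow> a \<in> x \<and> b \<in> x"
  unfolding prime_filter_def is_filter_def by (meson inf.cobounded1 inf.cobounded2)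

lemma prime_filter_sup_iff: "prime_filter x \<Longrightarrow> sup a b \<in> x \<longleftrightarrow> a \<in> x \<or> b \<in> x"
  unfolding prime_filter_def is_filter_def by (meson sup.cobounded1 sup.cobounded2)

lemma prime_filter_top: "prime_filter x \<Longrightarrow> top \<in> x"
  unfolding prime_filter_def is_filter_def by (meson all_not_in_conv top_greatest)

lemma prime_filter_bot: "prime_filter x \<Longrightarrow> bot \<notin> x"
  unfolding prime_filter_def is_filter_def by (metis UNIV_eq_I bot_least)

lemma is_filter_up_closure:
  assumes "M \<noteq> {}" and "\<And>a b. a \<in> M \<Longrightarrow> b \<in> M \<Longrightarrow> inf a b \<in> M"
  shows "is_filter {y. \<exists>m\<in>M. m \<le> y}"
  unfolding is_filter_def
proof (intro conjI ballI allI impI)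
  show "{y. \<exists>m\<in>M. m \<le> y} \<noteq> {}" using assms(1) by blast
next
  fix a b assume "a \<in> {y. \<exists>m\<in>M. m \<le> y}" "a \<le> b"
  then show "b \<in> {y. \<exists>m\<in>M. m \<le> y}" by (auto intro: order_trans)
next
  fix a b assume "a \<in> {y. \<exists>m\<in>M. m \<le> y}" "b \<in> {y. \<exists>m\<in>M. m \<le> y}"
  then obtain m1 m2 where "m1 \<in> M" "m2 \<in> M" "m1 \<le> a" "m2 \<le> b" by blast
  then have "inf m1 m2 \<in> M" "inf m1 m2 \<le> inf a b" using assms(2) inf_mono by blast+
  then show "inf a b \<in> {y. \<exists>m\<in>M. m \<le> y}" by blast
qed

lemma is_filter_Union_chain:
  assumes "C \<noteq> {}" and filters: "\<forall>F\<in>C. is_filter F"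
    and chain: "\<forall>X\<in>C. \<forall>Y\<in>C. X \<subseteq> Y \<or> Y \<subseteq> X"
  shows "is_filter (\<Union>C)"
  unfolding is_filter_def
proof (intro conjI ballI allI impI)
  obtain X where "X \<in> C" using assms(1) by blast
  then have "X \<noteq> {}" using filters unfolding is_filter_def by blast
  then show "\<Union>C \<noteq> {}" using \<open>X \<in> C\<close> by blast
next
  fix a b assume "a \<in> \<Union>C" "a \<le> b"
  then obtain X where "X \<in> C" "a \<in> X" by blast
  then have "is_filter X" using filters by blast
  then have "b \<in> X" using \<open>a \<in> X\<close> \<open>a \<le> b\<close> unfolding is_filter_def by blast
  then show "b \<in> \<Union>C" using \<open>X \<in> C\<close> by blast
next
  fix a b assume "a \<in> \<Union>C" "b \<in> \<Union>C"
  then obtain X Y where "X \<in> C" "Y \<in> C" "a \<in> X" "b \<in> Y" by blast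
  then obtain Z where "Z \<in> C" "a \<in> Z" "b \<in> Z" using chain by blast
  then have "is_filter Z" using filters by blast
  then have "inf a b \<in> Z" using \<open>a \<in> Z\<close> \<open>b \<in> Z\<close> unfolding is_filter_def by blast
  then show "inf a b \<in> \<Union>C" using \<open>Z \<in> C\<close> by blast
qed

text \<open>If neither \<open>c\<close> nor \<open>d\<close> is in \<open>F\<close>, then by maximality adjoining either one meets the
  down-set of \<open>N\<close>, and then so does \<open>sup c d\<close>.\<close>
lemma maximal_avoiding_filter_is_prime:
  assumes F: "is_filter F" and avoid: "\<forall>y\<in>F. \<forall>n\<in>N. \<not> y \<le> n"
    and N: "bot \<in> N" "\<forall>n1\<in>N. \<forall>n2\<in>N. sup n1 n2 \<in> N"
    and max: "\<And>G. is_filter G \<Longrightarrow> F \<subseteq> G \<Longrightarrow> \<forall>y\<in>G. \<forall>n\<in>N. \<not> y \<le> n \<Longrightarrow> G = F"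
  shows "prime_filter F"
proof -
  have escape: "\<exists>f\<in>F. \<exists>n\<in>N. inf f c \<le> n" if "c \<notin> F" for c
  proof (rule ccontr)
    define G where "G = {y. \<exists>m\<in>(\<lambda>f. inf f c) ` F. m \<le> y}"
    assume "\<not> (\<exists>f\<in>F. \<exists>n\<in>N. inf f c \<le> n)"
    then have "\<forall>y\<in>G. \<forall>n\<in>N. \<not> y \<le> n" unfolding G_def by (auto dest: order_trans)
    moreover have "is_filter G" unfolding G_def
    proof (rule is_filter_up_closure)
      show "(\<lambda>f. inf f c) ` F \<noteq> {}" using F unfolding is_filter_def by blast
      fix a b assume "a \<in> (\<lambda>f. inf f c) ` F" "b \<in> (\<lambda>f. inf f c) ` F"
      then obtain f g where "f \<in> F" "g \<in> F" "a = inf f c" "b = inf g c" by blast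
      then have "inf f g \<in> F" "inf a b = inf (inf f g) c"
        using F unfolding is_filter_def by (auto simp: inf_aci)
      then show "inf a b \<in> (\<lambda>f. inf f c) ` F" by blast
    qed
    moreover have "F \<subseteq> G" unfolding G_def using inf_le1 by blast
    moreover have "c \<in> G" using F unfolding G_def is_filter_def by auto
    ultimately show False using max \<open>c \<notin> F\<close> by blast
  qed
  have "c \<in> F \<or> d \<in> F" if "sup c d \<in> F" for c d
  proof (rule ccontr)
    assume "\<not> (c \<in> F \<or> d \<in> F)"
    then obtain f1 n1 f2 n2
      where "f1 \<in> F" "n1 \<in> N" "inf f1 c \<le> n1" "f2 \<in> F" "n2 \<in> N" "inf f2 d \<le> n2"
      using escape by meson
    define g where "g = inf f1 f2"
    have "g \<in> F" using F \<open>f1 \<in> F\<close> \<open>f2 \<in> F\<close> unfolding g_def is_filter_def by blast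
    then have "inf g (sup c d) \<in> F" using F that unfolding is_filter_def by blast
    moreover have "inf g (sup c d) \<le> sup n1 n2"
    proof -
      have "inf g c \<le> inf f1 c" "inf g d \<le> inf f2 d"
        unfolding g_def by (simp_all add: inf_mono le_infI1)
      then have "inf g c \<le> n1" "inf g d \<le> n2"
        using \<open>inf f1 c \<le> n1\<close> \<open>inf f2 d \<le> n2\<close> order_trans by blast+
      then show ?thesis by (simp add: inf_sup_distrib1 le_supI1 le_supI2)
    qed
    moreover have "sup n1 n2 \<in> N" using N(2) \<open>n1 \<in> N\<close> \<open>n2 \<in> N\<close> by blast
    ultimately show False using avoid by blast
  qed
  moreover have "F \<noteq> UNIV" using avoid N(1) by blast
  ultimately show ?thesis using F unfolding prime_filter_def by blast
qed

inductive_set meet_closure :: "'a::{bounded_lattice,distrib_lattice} set \<Rightarrow> 'a set" for J where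
  top: "top \<in> meet_closure J"
| base: "b \<in> J \<Longrightarrow> b \<in> meet_closure J"
| inf: "m1 \<in> meet_closure J \<Longrightarrow> m2 \<in> meet_closure J \<Longrightarrow> inf m1 m2 \<in> meet_closure J"

inductive_set join_closure :: "'a::{bounded_lattice,distrib_lattice} set \<Rightarrow> 'a set" for I where
  bot: "bot \<in> join_closure I"
| base: "a \<in> I \<Longrightarrow> a \<in> join_closure I"
| sup: "n1 \<in> join_closure I \<Longrightarrow> n2 \<in> join_closure I \<Longrightarrow> sup n1 n2 \<in> join_closure I"

text \<open>Zorn's lemma yields a filter containing \<open>J\<close> that is maximal among those avoiding the
  down-set of \<open>join_closure I\<close>.\<close>
theorem prime_filter_theorem:
  assumes "\<forall>m\<in>meet_closure J. \<forall>n\<in>join_closure I. \<not> m \<le> n"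
  shows "\<exists>x. prime_filter x \<and> J \<subseteq> x \<and> x \<inter> I = {}"
proof -
  define N where "N = join_closure I"
  define \<A> where "\<A> = {F. is_filter F \<and> J \<subseteq> F \<and> (\<forall>y\<in>F. \<forall>n\<in>N. \<not> y \<le> n)}"
  have "is_filter {y. \<exists>m\<in>meet_closure J. m \<le> y}"
    by (rule is_filter_up_closure) (auto intro: meet_closure.intros)
  moreover have "\<forall>y\<in>{y. \<exists>m\<in>meet_closure J. m \<le> y}. \<forall>n\<in>N. \<not> y \<le> n"
    using assms unfolding N_def by (auto dest: order_trans)
  moreover have "J \<subseteq> {y. \<exists>m\<in>meet_closure J. m \<le> y}" by (auto intro: meet_closure.base)
  ultimately have "{y. \<exists>m\<in>meet_closure J. m \<le> y} \<in> \<A>" unfolding \<A>_def by blast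
  then have "\<A> \<noteq> {}" by blast
  then have "\<exists>F\<in>\<A>. \<forall>G\<in>\<A>. F \<subseteq> G \<longrightarrow> G = F"
  proof (rule subset_Zorn_nonempty)
    fix C assume "C \<noteq> {}" "subset.chain \<A> C"
    then have "C \<subseteq> \<A>" and chain: "\<forall>X\<in>C. \<forall>Y\<in>C. X \<subseteq> Y \<or> Y \<subseteq> X"
      by (auto simp: subset.chain_def)
    moreover have "\<forall>X\<in>C. is_filter X" using \<open>C \<subseteq> \<A>\<close> unfolding \<A>_def by blast
    ultimately have "is_filter (\<Union>C)" using \<open>C \<noteq> {}\<close> is_filter_Union_chain by blast
    moreover have "J \<subseteq> \<Union>C" using \<open>C \<noteq> {}\<close> \<open>C \<subseteq> \<A>\<close> unfolding \<A>_def by blast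
    moreover have "\<forall>y\<in>\<Union>C. \<forall>n\<in>N. \<not> y \<le> n" using \<open>C \<subseteq> \<A>\<close> unfolding \<A>_def by blast
    ultimately show "\<Union>C \<in> \<A>" unfolding \<A>_def by blast
  qed
  then obtain F where "F \<in> \<A>" and max: "\<forall>G\<in>\<A>. F \<subseteq> G \<longrightarrow> G = F" by blast
  then have F: "is_filter F" "J \<subseteq> F" "\<forall>y\<in>F. \<forall>n\<in>N. \<not> y \<le> n" unfolding \<A>_def by blast+
  have "prime_filter F"
  proof (rule maximal_avoiding_filter_is_prime[OF F(1,3)])
    show "bot \<in> N" "\<forall>n1\<in>N. \<forall>n2\<in>N. sup n1 n2 \<in> N"
      unfolding N_def by (auto intro: join_closure.intros)
    fix G assume "is_filter G" "F \<subseteq> G" "\<forall>y\<in>G. \<forall>n\<in>N. \<not> y \<le> n"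
    moreover from this have "J \<subseteq> G" using F(2) by blast
    ultimately have "G \<in> \<A>" unfolding \<A>_def by blast
    then show "G = F" using max \<open>F \<subseteq> G\<close> by blast
  qed
  moreover have "a \<notin> F" if "a \<in> I" for a
    using F(3) join_closure.base[OF that] unfolding N_def by (meson order_refl)
  ultimately show ?thesis using F(2) by blast
qed

lemma prime_filter_separation:
  fixes a b :: "'a::{bounded_lattice,distrib_lattice}"
  assumes "\<not> a \<le> b"
  shows "\<exists>x. prime_filter x \<and> a \<in> x \<and> b \<notin> x"
proof -
  have "a \<le> m" if "m \<in> meet_closure {a}" for m
    using that by induction auto
  moreover have "n \<le> b" if "n \<in> join_closure {b}" for n
    using that by induction auto
  ultimately have "\<forall>m\<in>meet_closure {a}. \<forall>n\<in>join_closure {b}. \<not> m \<le> n"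
    using assms by (meson order_trans)
  then show ?thesis using prime_filter_theorem[of "{a}" "{b}"] by blast
qed

section \<open>The Priestley topology\<close>

lemma mem_stone_map: "x \<in> stone_map a \<longleftrightarrow> prime_filter x \<and> a \<in> x"
  unfolding stone_map_def prime_filters_def by simp

lemma stone_map_subset_prime_filters: "stone_map a \<subseteq> prime_filters"
  unfolding stone_map_def by blast

lemma stone_map_top: "stone_map top = prime_filters"
  unfolding stone_map_def prime_filters_def using prime_filter_top by blast

lemma stone_map_bot: "stone_map bot = {}"
  unfolding stone_map_def prime_filters_def using prime_filter_bot by blast

lemma stone_map_inf: "stone_map (inf a b) = stone_map a \<inter> stone_map b"
  by (auto simp: mem_stone_map prime_filter_inf_iff)

lemma stone_map_sup: "stone_map (sup a b) = stone_map a \<union> stone_map b"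
  by (auto simp: mem_stone_map prime_filter_sup_iff)

lemma stone_map_subset_iff: "stone_map a \<subseteq> stone_map b \<longleftrightarrow> a \<le> b"
proof
  assume "stone_map a \<subseteq> stone_map b"
  then show "a \<le> b" using prime_filter_separation[of a b] mem_stone_map by blast
qed (auto simp: mem_stone_map intro: prime_filter_upward)

lemma topspace_priestley_top: "topspace priestley_top = prime_filters"
proof -
  have "stone_map top - stone_map bot \<in> {stone_map a - stone_map b | a b. True}" by blast
  then have "prime_filters \<subseteq> \<Union>{stone_map a - stone_map b | a b. True}"
    by (auto simp: stone_map_top stone_map_bot)
  moreover have "\<Union>{stone_map a - stone_map b | a b. True} \<subseteq> prime_filters"
    using stone_map_subset_prime_filters by blast
  ultimately show ?thesis unfolding priestley_top_def topology_generated_by_topspace by blast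
qed

lemma openin_stone_map_diff: "openin priestley_top (stone_map a - stone_map b)"
  unfolding priestley_top_def by (rule topology_generated_by_Basis) blast

lemma openin_stone_map: "openin priestley_top (stone_map a)"
  using openin_stone_map_diff[of a bot] by (simp add: stone_map_bot)

lemma openin_compl_stone_map: "openin priestley_top (prime_filters - stone_map a)"
  using openin_stone_map_diff[of top a] by (simp add: stone_map_top)

lemma closedin_stone_map: "closedin priestley_top (stone_map a)"
  unfolding closedin_def topspace_priestley_top
  using stone_map_subset_prime_filters openin_compl_stone_map by blast

lemma clopen_upset_stone_map: "clopen_upset (stone_map a)"
  unfolding clopen_upset_def is_upset_def prime_filters_def
  by (auto simp: openin_stone_map closedin_stone_map mem_stone_map)

text \<open>The generating sets \<open>stone_map c - stone_map d\<close> are closed under finite intersections,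
  so they form a base.\<close>
lemma priestley_top_basic_nbhd:
  assumes "openin priestley_top T" and "x \<in> T"
  shows "\<exists>c d. x \<in> stone_map c - stone_map d \<and> stone_map c - stone_map d \<subseteq> T"
proof -
  have "generate_topology_on {stone_map a - stone_map b | a b. True} T"
    using assms(1) unfolding priestley_top_def by (rule openin_topology_generated_by)
  then show ?thesis using assms(2)
  proof (induction arbitrary: x)
    case (Int T1 T2)
    then obtain c1 d1 c2 d2
      where "x \<in> stone_map c1 - stone_map d1" "stone_map c1 - stone_map d1 \<subseteq> T1"
      and "x \<in> stone_map c2 - stone_map d2" "stone_map c2 - stone_map d2 \<subseteq> T2" by blast
    then have "x \<in> stone_map (inf c1 c2) - stone_map (sup d1 d2)"
      and "stone_map (inf c1 c2) - stone_map (sup d1 d2) \<subseteq> T1 \<inter> T2"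
      by (auto simp: stone_map_inf stone_map_sup)
    then show ?case by blast
  qed blast+
qed

definition priestley_subbase :: "'a::{bounded_lattice,distrib_lattice} set set set" where
  "priestley_subbase = range stone_map \<union> range (\<lambda>b. prime_filters - stone_map b)"

lemma topology_priestley_subbase:
  "topology (arbitrary union_of
     (finite intersection_of (\<lambda>V. V \<in> priestley_subbase) relative_to prime_filters))
   = priestley_top"
proof (rule topology_base_unique)
  fix S assume "(finite intersection_of (\<lambda>V. V \<in> priestley_subbase) relative_to prime_filters) S"
  then have "openin (topology (arbitrary union_of
      (finite intersection_of (\<lambda>V. V \<in> priestley_subbase) relative_to prime_filters))) S"
    by (simp add: openin_subbase arbitrary_union_of_inc)
  moreover have "openin priestley_top prime_filters"
    using openin_topspace topspace_priestley_top by metis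
  moreover have "openin priestley_top V" if "V \<in> priestley_subbase" for V
    using that openin_stone_map openin_compl_stone_map unfolding priestley_subbase_def by blast
  ultimately show "openin priestley_top S"
    using minimal_topology_subbase[where P = "\<lambda>V. V \<in> priestley_subbase"] by blast
next
  fix T x assume "openin priestley_top T" "x \<in> T"
  then obtain c d where cd: "x \<in> stone_map c - stone_map d" "stone_map c - stone_map d \<subseteq> T"
    using priestley_top_basic_nbhd by blast
  have "stone_map c - stone_map d = prime_filters \<inter> (stone_map c \<inter> (prime_filters - stone_map d))"
    using stone_map_subset_prime_filters by blast
  moreover have "(finite intersection_of (\<lambda>V. V \<in> priestley_subbase))
      (stone_map c \<inter> (prime_filters - stone_map d))"
    by (intro finite_intersection_of_Int finite_intersection_of_inc)
      (auto simp: priestley_subbase_def)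
  ultimately have "(finite intersection_of (\<lambda>V. V \<in> priestley_subbase) relative_to prime_filters)
      (stone_map c - stone_map d)"
    unfolding relative_to_def by blast
  then show "\<exists>B. (finite intersection_of (\<lambda>V. V \<in> priestley_subbase) relative_to prime_filters) B
      \<and> x \<in> B \<and> B \<subseteq> T"
    using cd by blast
qed

lemma meet_closure_compl_stone_map_cover:
  "m \<in> meet_closure J \<Longrightarrow>
   \<exists>J0. finite J0 \<and> J0 \<subseteq> J \<and> prime_filters - stone_map m \<subseteq> (\<Union>b\<in>J0. prime_filters - stone_map b)"
proof (induction rule: meet_closure.induct)
  case top
  show ?case by (auto simp: stone_map_top)
next
  case (base b)
  show ?case by (rule exI[of _ "{b}"]) (use base in auto)
next
  case (inf m1 m2)
  then obtain A B
    where "finite A" "A \<subseteq> J" "prime_filters - stone_map m1 \<subseteq> (\<Union>b\<in>A. prime_filters - stone_map b)"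
    "finite B" "B \<subseteq> J" "prime_filters - stone_map m2 \<subseteq> (\<Union>b\<in>B. prime_filters - stone_map b)" by blast
  then show ?case by (intro exI[of _ "A \<union> B"]) (auto simp: stone_map_inf)
qed

lemma join_closure_stone_map_cover:
  "n \<in> join_closure I \<Longrightarrow> \<exists>I0. finite I0 \<and> I0 \<subseteq> I \<and> stone_map n \<subseteq> (\<Union>a\<in>I0. stone_map a)"
proof (induction rule: join_closure.induct)
  case bot
  show ?case by (auto simp: stone_map_bot)
next
  case (base a)
  show ?case by (rule exI[of _ "{a}"]) (use base in auto)
next
  case (sup n1 n2)
  then obtain A B where "finite A" "A \<subseteq> I" "stone_map n1 \<subseteq> (\<Union>a\<in>A. stone_map a)"
    "finite B" "B \<subseteq> I" "stone_map n2 \<subseteq> (\<Union>a\<in>B. stone_map a)" by blast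
  then show ?case by (intro exI[of _ "A \<union> B"]) (auto simp: stone_map_sup)
qed

text \<open>By Alexander's subbase theorem it suffices to treat covers by sets \<open>stone_map a\<close>,
  \<open>a \<in> I\<close>, and complements of sets \<open>stone_map b\<close>, \<open>b \<in> J\<close>. Either a finite meet of \<open>J\<close>
  lies below a finite join of \<open>I\<close>, which gives a finite subcover, or the prime filter theorem
  yields an uncovered point.\<close>
lemma compact_space_priestley_top: "compact_space priestley_top"
proof (rule Alexander_subbase_alt[OF _ _ topology_priestley_subbase])
  show "prime_filters \<subseteq> \<Union>priestley_subbase"
    unfolding priestley_subbase_def using stone_map_top by blast
next
  fix C assume C: "C \<subseteq> priestley_subbase" and cover: "prime_filters \<subseteq> \<Union>C"
  define I where "I = {a. stone_map a \<in> C}"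
  define J where "J = {b. prime_filters - stone_map b \<in> C}"
  show "\<exists>C'. finite C' \<and> C' \<subseteq> C \<and> prime_filters \<subseteq> \<Union>C'"
  proof (cases "\<exists>m\<in>meet_closure J. \<exists>n\<in>join_closure I. m \<le> n")
    case True
    then obtain m n where "m \<in> meet_closure J" "n \<in> join_closure I" "m \<le> n" by blast
    obtain J0 where J0: "finite J0" "J0 \<subseteq> J"
        "prime_filters - stone_map m \<subseteq> (\<Union>b\<in>J0. prime_filters - stone_map b)"
      using meet_closure_compl_stone_map_cover[OF \<open>m \<in> meet_closure J\<close>] by blast
    obtain I0 where I0: "finite I0" "I0 \<subseteq> I" "stone_map n \<subseteq> (\<Union>a\<in>I0. stone_map a)"
      using join_closure_stone_map_cover[OF \<open>n \<in> join_closure I\<close>] by blast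
    define C' where "C' = (\<lambda>b. prime_filters - stone_map b) ` J0 \<union> stone_map ` I0"
    have "stone_map m \<subseteq> stone_map n" using \<open>m \<le> n\<close> stone_map_subset_iff by blast
    then have "prime_filters \<subseteq> (prime_filters - stone_map m) \<union> stone_map n" by blast
    also have "\<dots> \<subseteq> \<Union>C'" unfolding C'_def using J0(3) I0(3) by auto
    finally have "prime_filters \<subseteq> \<Union>C'" .
    moreover have "C' \<subseteq> C" using J0(2) I0(2) unfolding C'_def I_def J_def by auto
    moreover have "finite C'" using J0(1) I0(1) unfolding C'_def by blast
    ultimately show ?thesis by blast
  next
    case False
    then obtain x where x: "prime_filter x" "J \<subseteq> x" "x \<inter> I = {}"
      using prime_filter_theorem[of J I] by blast
    then have "x \<in> prime_filters" unfolding prime_filters_def by blast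
    then obtain V where "V \<in> C" "x \<in> V" using cover by blast
    then have "V \<in> priestley_subbase" using C by blast
    then consider a where "V = stone_map a" | b where "V = prime_filters - stone_map b"
      unfolding priestley_subbase_def by blast
    then have False
    proof cases
      case (1 a)
      then show False using x \<open>V \<in> C\<close> \<open>x \<in> V\<close> unfolding I_def by (auto simp: mem_stone_map)
    next
      case (2 b)
      then show False using x \<open>V \<in> C\<close> \<open>x \<in> V\<close> unfolding J_def by (auto simp: mem_stone_map)
    qed
    then show ?thesis ..
  qed
qed

lemma ex_stone_map_eq_Union:
  "finite A \<Longrightarrow> \<exists>a. stone_map a = (\<Union>b\<in>A. stone_map b)"
proof (induction rule: finite_induct)
  case empty
  show ?case using stone_map_bot by auto
next
  case (insert b A)
  then obtain a where "stone_map a = (\<Union>b\<in>A. stone_map b)" by blast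
  then have "stone_map (sup b a) = (\<Union>b\<in>insert b A. stone_map b)" by (simp add: stone_map_sup)
  then show ?case by blast
qed

lemma ex_compl_stone_map_eq_Union:
  "finite A \<Longrightarrow> \<exists>a. prime_filters - stone_map a = (\<Union>b\<in>A. prime_filters - stone_map b)"
proof (induction rule: finite_induct)
  case empty
  show ?case using stone_map_top by auto
next
  case (insert b A)
  then obtain a where "prime_filters - stone_map a = (\<Union>b\<in>A. prime_filters - stone_map b)" by blast
  then have "prime_filters - stone_map (inf b a) = (\<Union>b\<in>insert b A. prime_filters - stone_map b)"
    by (auto simp: stone_map_inf)
  then show ?case by blast
qed

lemma compactin_stone_map_cover:
  assumes "compactin priestley_top K" and "K \<subseteq> (\<Union>a\<in>A. stone_map a)"
  shows "\<exists>a. K \<subseteq> stone_map a \<and> stone_map a \<subseteq> (\<Union>a\<in>A. stone_map a)"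
proof -
  obtain \<F> where "finite \<F>" "\<F> \<subseteq> stone_map ` A" "K \<subseteq> \<Union>\<F>"
    using compactinD[OF assms(1) _ assms(2)] openin_stone_map by blast
  moreover from this obtain A0 where "A0 \<subseteq> A" "finite A0" "\<F> = stone_map ` A0"
    using finite_subset_image[of \<F> stone_map A] by blast
  moreover obtain a where "stone_map a = (\<Union>b\<in>A0. stone_map b)"
    using ex_stone_map_eq_Union[OF \<open>finite A0\<close>] by blast
  ultimately show ?thesis by (metis image_mono Sup_subset_mono)
qed

lemma compactin_compl_stone_map_cover:
  assumes "compactin priestley_top K" and "K \<subseteq> (\<Union>b\<in>B. prime_filters - stone_map b)"
  shows "\<exists>b. K \<subseteq> prime_filters - stone_map b
    \<and> prime_filters - stone_map b \<subseteq> (\<Union>b\<in>B. prime_filters - stone_map b)"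
proof -
  obtain \<F> where "finite \<F>" "\<F> \<subseteq> (\<lambda>b. prime_filters - stone_map b) ` B" "K \<subseteq> \<Union>\<F>"
    using compactinD[OF assms(1) _ assms(2)] openin_compl_stone_map by blast
  moreover from this obtain B0
    where "B0 \<subseteq> B" "finite B0" "\<F> = (\<lambda>b. prime_filters - stone_map b) ` B0"
    using finite_subset_image[of \<F> "\<lambda>b. prime_filters - stone_map b" B] by blast
  moreover obtain b where "prime_filters - stone_map b = (\<Union>b\<in>B0. prime_filters - stone_map b)"
    using ex_compl_stone_map_eq_Union[OF \<open>finite B0\<close>] by blast
  ultimately show ?thesis by (metis image_mono Sup_subset_mono)
qed

text \<open>A clopen upset \<open>V\<close> is compact, and so is its complement. Each point \<open>y\<close> outside \<open>V\<close> is
  separated from \<open>V\<close> by some \<open>stone_map a\<close>, as \<open>V\<close> is covered by the \<open>stone_map a\<close> with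
  \<open>a \<notin> y\<close>; then finitely many such separations exhaust the complement.\<close>
lemma clopen_upset_iff_stone_map: "clopen_upset V \<longleftrightarrow> (\<exists>a. V = stone_map a)"
proof
  assume "clopen_upset V"
  then have "openin priestley_top V" "closedin priestley_top V" "is_upset V"
    unfolding clopen_upset_def by blast+
  have "V \<subseteq> prime_filters" using \<open>is_upset V\<close> unfolding is_upset_def by blast
  have "compactin priestley_top V"
    using closedin_compact_space[OF compact_space_priestley_top \<open>closedin priestley_top V\<close>] .
  have separate: "\<exists>a. V \<subseteq> stone_map a \<and> y \<notin> stone_map a" if "y \<in> prime_filters - V" for y
  proof -
    have "V \<subseteq> (\<Union>a\<in>- y. stone_map a)"
    proof
      fix x assume "x \<in> V"
      then have "\<not> x \<subseteq> y" using \<open>is_upset V\<close> that unfolding is_upset_def by blast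
      then obtain a where "a \<in> x" "a \<notin> y" by blast
      then show "x \<in> (\<Union>a\<in>- y. stone_map a)"
        using \<open>x \<in> V\<close> \<open>V \<subseteq> prime_filters\<close> by (auto simp: mem_stone_map prime_filters_def)
    qed
    then obtain a where "V \<subseteq> stone_map a" "stone_map a \<subseteq> (\<Union>a\<in>- y. stone_map a)"
      using compactin_stone_map_cover[OF \<open>compactin priestley_top V\<close>] by blast
    moreover have "y \<notin> (\<Union>a\<in>- y. stone_map a)" by (auto simp: mem_stone_map)
    ultimately show ?thesis by blast
  qed
  have "closedin priestley_top (prime_filters - V)"
    using \<open>openin priestley_top V\<close> topspace_priestley_top by (metis closedin_diff closedin_topspace)
  then have "compactin priestley_top (prime_filters - V)"
    by (rule closedin_compact_space[OF compact_space_priestley_top])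
  moreover have "prime_filters - V \<subseteq> (\<Union>b\<in>{b. V \<subseteq> stone_map b}. prime_filters - stone_map b)"
  proof
    fix y assume "y \<in> prime_filters - V"
    with separate obtain a where "V \<subseteq> stone_map a" "y \<notin> stone_map a" by blast
    then show "y \<in> (\<Union>b\<in>{b. V \<subseteq> stone_map b}. prime_filters - stone_map b)"
      using \<open>y \<in> prime_filters - V\<close> by blast
  qed
  ultimately have "\<exists>b. prime_filters - V \<subseteq> prime_filters - stone_map b \<and>
      prime_filters - stone_map b \<subseteq> (\<Union>b\<in>{b. V \<subseteq> stone_map b}. prime_filters - stone_map b)"
    by (rule compactin_compl_stone_map_cover)
  then obtain b where b: "prime_filters - V \<subseteq> prime_filters - stone_map b"
    and "prime_filters - stone_map b \<subseteq> (\<Union>b\<in>{b. V \<subseteq> stone_map b}. prime_filters - stone_map b)"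
    by blast
  moreover have "(\<Union>b\<in>{b. V \<subseteq> stone_map b}. prime_filters - stone_map b) \<subseteq> prime_filters - V"
    by blast
  ultimately have "prime_filters - stone_map b \<subseteq> prime_filters - V" by blast
  with b(1) have "prime_filters - stone_map b = prime_filters - V" by (rule subset_antisym[rotated])
  then show "\<exists>a. V = stone_map a"
    using \<open>V \<subseteq> prime_filters\<close> stone_map_subset_prime_filters by blast
qed (auto simp: clopen_upset_stone_map)

lemma in_closure_of_Union_stone_map:
  "x \<in> priestley_top closure_of (\<Union>a\<in>S. stone_map a) \<longleftrightarrow>
     x \<in> prime_filters \<and> (\<forall>c d. x \<in> stone_map c - stone_map d \<longrightarrow> (\<exists>a\<in>S. \<not> inf c a \<le> d))"
proof -
  have meets_iff: "(\<exists>a\<in>S. \<not> inf c a \<le> d) \<longleftrightarrow>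
      (\<exists>y. y \<in> (\<Union>a\<in>S. stone_map a) \<and> y \<in> stone_map c - stone_map d)" for c d
  proof -
    have "\<not> inf c a \<le> d \<longleftrightarrow> (\<exists>y\<in>stone_map a. y \<in> stone_map c - stone_map d)" for a
    proof -
      have "inf c a \<le> d \<longleftrightarrow> stone_map (inf c a) \<subseteq> stone_map d"
        by (rule stone_map_subset_iff[symmetric])
      then show ?thesis unfolding stone_map_inf by blast
    qed
    then show ?thesis by blast
  qed
  show ?thesis
    unfolding in_closure_of topspace_priestley_top
  proof (intro conj_cong refl iffI allI impI)
    fix c d
    assume closure: "\<forall>T. x \<in> T \<and> openin priestley_top T \<longrightarrow> (\<exists>y. y \<in> (\<Union>a\<in>S. stone_map a) \<and> y \<in> T)"
      and "x \<in> stone_map c - stone_map d"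
    then have "\<exists>y. y \<in> (\<Union>a\<in>S. stone_map a) \<and> y \<in> stone_map c - stone_map d"
      using closure[rule_format, of "stone_map c - stone_map d"] openin_stone_map_diff[of c d]
      by blast
    then show "\<exists>a\<in>S. \<not> inf c a \<le> d" by (rule meets_iff[THEN iffD2])
  next
    fix T
    assume meets: "\<forall>c d. x \<in> stone_map c - stone_map d \<longrightarrow> (\<exists>a\<in>S. \<not> inf c a \<le> d)"
      and T: "x \<in> T \<and> openin priestley_top T"
    obtain c d where cd: "x \<in> stone_map c - stone_map d" "stone_map c - stone_map d \<subseteq> T"
      using priestley_top_basic_nbhd T by meson
    have "\<exists>a\<in>S. \<not> inf c a \<le> d" using meets cd(1) by blast
    then have "\<exists>y. y \<in> (\<Union>a\<in>S. stone_map a) \<and> y \<in> stone_map c - stone_map d"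
      by (rule meets_iff[THEN iffD1])
    then show "\<exists>y. y \<in> (\<Union>a\<in>S. stone_map a) \<and> y \<in> T" using cd(2) by blast
  qed
qed

section \<open>Closures of unions of basic clopen upsets\<close>

lemma is_join_unique: "is_join S j \<Longrightarrow> is_join S j' \<Longrightarrow> j = j'"
  unfolding is_join_def by (blast intro: antisym)

lemma distributive_join_iff:
  fixes S :: "'a::bounded_lattice set"
  shows "is_join S j \<and> (\<forall>c. is_join ((\<lambda>s. inf c s) ` S) (inf c j)) \<longleftrightarrow>
   (\<forall>c d. (\<forall>a\<in>S. inf c a \<le> d) \<longleftrightarrow> inf c j \<le> d)"
proof
  assume "is_join S j \<and> (\<forall>c. is_join ((\<lambda>s. inf c s) ` S) (inf c j))"
  then have upper: "\<forall>a\<in>S. inf c a \<le> inf c j"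
    and least: "(\<forall>a\<in>S. inf c a \<le> d) \<Longrightarrow> inf c j \<le> d" for c d
    unfolding is_join_def by blast+
  show "\<forall>c d. (\<forall>a\<in>S. inf c a \<le> d) \<longleftrightarrow> inf c j \<le> d"
    using upper least order_trans by metis
next
  assume D: "\<forall>c d. (\<forall>a\<in>S. inf c a \<le> d) \<longleftrightarrow> inf c j \<le> d"
  have "is_join ((\<lambda>s. inf c s) ` S) (inf c j)" for c
  proof -
    have "\<forall>a\<in>S. inf c a \<le> inf c j" using D by blast
    moreover have "inf c j \<le> u" if "\<forall>a\<in>S. inf c a \<le> u" for u using D that by blast
    ultimately show ?thesis unfolding is_join_def by blast
  qed
  moreover have "is_join S j" using D[rule_format, of top] unfolding is_join_def by simp
  ultimately show "is_join S j \<and> (\<forall>c. is_join ((\<lambda>s. inf c s) ` S) (inf c j))" by blast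
qed

text \<open>A basic open set \<open>stone_map c - stone_map d\<close> misses \<open>\<Union>a\<in>S. stone_map a\<close> exactly when
  \<open>inf c a \<le> d\<close> for all \<open>a \<in> S\<close>, so closures of such unions are governed by distributive joins.\<close>
lemma closure_of_Union_stone_map_eq_iff:
  "priestley_top closure_of (\<Union>a\<in>S. stone_map a) = stone_map j \<longleftrightarrow>
   (\<forall>c d. (\<forall>a\<in>S. inf c a \<le> d) \<longleftrightarrow> inf c j \<le> d)"
proof
  assume closure: "priestley_top closure_of (\<Union>a\<in>S. stone_map a) = stone_map j"
  have "(\<Union>a\<in>S. stone_map a) \<subseteq> topspace priestley_top"
    using stone_map_subset_prime_filters topspace_priestley_top by blast
  then have "(\<Union>a\<in>S. stone_map a) \<subseteq> stone_map j"
    using closure_of_subset closure by metis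
  then have upper: "a \<le> j" if "a \<in> S" for a
    using that stone_map_subset_iff by blast
  show "\<forall>c d. (\<forall>a\<in>S. inf c a \<le> d) \<longleftrightarrow> inf c j \<le> d"
  proof (intro allI iffI ballI)
    fix c d assume below: "\<forall>a\<in>S. inf c a \<le> d"
    have "stone_map (inf c j) \<subseteq> stone_map d"
    proof
      fix x assume "x \<in> stone_map (inf c j)"
      then have "x \<in> stone_map c" "x \<in> priestley_top closure_of (\<Union>a\<in>S. stone_map a)"
        by (simp_all add: closure stone_map_inf)
      then show "x \<in> stone_map d"
        using below unfolding in_closure_of_Union_stone_map by blast
    qed
    then show "inf c j \<le> d" by (simp only: stone_map_subset_iff)
  next
    fix c d a assume "inf c j \<le> d" "a \<in> S"
    then show "inf c a \<le> d" using upper by (meson inf_mono order_refl order_trans)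
  qed
next
  assume D: "\<forall>c d. (\<forall>a\<in>S. inf c a \<le> d) \<longleftrightarrow> inf c j \<le> d"
  show "priestley_top closure_of (\<Union>a\<in>S. stone_map a) = stone_map j"
  proof (intro set_eqI)
    fix x
    have "x \<in> priestley_top closure_of (\<Union>a\<in>S. stone_map a) \<longleftrightarrow>
        x \<in> prime_filters \<and> (\<forall>c d. x \<in> stone_map c - stone_map d \<longrightarrow> \<not> inf c j \<le> d)"
      unfolding in_closure_of_Union_stone_map using D by blast
    also have "\<dots> \<longleftrightarrow> x \<in> stone_map j"
    proof safe
      assume H: "\<forall>c d. x \<in> stone_map c - stone_map d \<longrightarrow> \<not> inf c j \<le> d" "x \<in> prime_filters"
      show "x \<in> stone_map j"
      proof (rule ccontr)
        assume "x \<notin> stone_map j"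
        then have "x \<in> stone_map top - stone_map j" using H(2) stone_map_top by blast
        then show False using H(1) inf_top_left order_refl by metis
      qed
    next
      fix c d assume "x \<in> stone_map j" "x \<in> stone_map c" "x \<notin> stone_map d" "inf c j \<le> d"
      then show False using stone_map_subset_iff[of "inf c j" d] stone_map_inf by blast
    qed (use stone_map_subset_prime_filters in blast)
    finally show "x \<in> priestley_top closure_of (\<Union>a\<in>S. stone_map a) \<longleftrightarrow> x \<in> stone_map j" .
  qed
qed

lemma card_of_image_ordLess: "(card_of A, \<kappa>) \<in> ordLess \<Longrightarrow> (card_of (f ` A), \<kappa>) \<in> ordLess"
  using card_of_image ordLeq_ordLess_trans by blast

lemma kappa_frame_imp_clopen_closure:
  assumes "kappa_frame \<kappa> TYPE('a::{bounded_lattice,distrib_lattice})"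
    and "kappa_clopen_upset \<kappa> (U :: 'a set set)"
  shows "clopen_upset (priestley_top closure_of U)"
proof -
  obtain \<U> where "(card_of \<U>, \<kappa>) \<in> ordLess" "\<forall>V\<in>\<U>. clopen_upset V" "U = \<Union>\<U>"
    using assms(2) unfolding kappa_clopen_upset_def by blast
  moreover from this obtain f where "\<forall>V\<in>\<U>. V = stone_map (f V)"
    using clopen_upset_iff_stone_map by metis
  ultimately have U: "U = (\<Union>a\<in>f ` \<U>. stone_map a)" and "(card_of (f ` \<U>), \<kappa>) \<in> ordLess"
    using card_of_image_ordLess by auto
  then obtain j where "is_join (f ` \<U>) j" "\<forall>c. is_join ((\<lambda>s. inf c s) ` f ` \<U>) (inf c j)"
    using assms(1) unfolding kappa_frame_def by blast
  then have "priestley_top closure_of U = stone_map j"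
    unfolding U closure_of_Union_stone_map_eq_iff distributive_join_iff[symmetric] by blast
  then show ?thesis by (simp add: clopen_upset_stone_map)
qed

lemma clopen_closure_imp_kappa_frame:
  assumes "\<forall>U::'a::{bounded_lattice,distrib_lattice} set set.
    kappa_clopen_upset \<kappa> U \<longrightarrow> clopen_upset (priestley_top closure_of U)"
  shows "kappa_frame \<kappa> TYPE('a)"
  unfolding kappa_frame_def
proof (intro allI impI)
  fix S :: "'a set" assume "(card_of S, \<kappa>) \<in> ordLess"
  then have "kappa_clopen_upset \<kappa> (\<Union>a\<in>S. stone_map a)"
    unfolding kappa_clopen_upset_def using card_of_image_ordLess clopen_upset_stone_map by blast
  then obtain j where "priestley_top closure_of (\<Union>a\<in>S. stone_map a) = stone_map j"
    using assms clopen_upset_iff_stone_map by blast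
  then have "is_join S j \<and> (\<forall>c. is_join ((\<lambda>s. inf c s) ` S) (inf c j))"
    unfolding closure_of_Union_stone_map_eq_iff distributive_join_iff[symmetric] .
  then show "(\<exists>j. is_join S j) \<and> (\<forall>c j'. is_join S j' \<longrightarrow> is_join ((\<lambda>s. inf c s) ` S) (inf c j'))"
    using is_join_unique by blast
qed

theorem theorem5p18:
  fixes \<kappa> :: "'b rel"
  assumes "Card_order \<kappa>" and "infinite (Field \<kappa>)" and "regularCard \<kappa>"
  shows "kappa_frame \<kappa> TYPE('a::{bounded_lattice,distrib_lattice}) \<longleftrightarrow>
         (\<forall>U::'a set set. kappa_clopen_upset \<kappa> U \<longrightarrow>
            clopen_upset (priestley_top closure_of U))"
  using kappa_frame_imp_clopen_closure clopen_closure_imp_kappa_frame by blast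

end
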